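(* Fix $\alpha\in(0,1)$ and $p,q\in[0,1]$ with $q=\alpha p$. Let $\hat{\mathcal{M}}^\ast(p,q)$ be the output of the greedy procedure \texttt{OptSupplierSet}$(p,q)$, and let $\mathcal{M}^\ast$ be a maximizer of $R(p,q,\mathcal{M})$ over all $\mathcal{M}\subseteq\widetilde{S}(q)$ with $|\mathcal{M}|\le b$. Then $$R(p,q,\hat{\mathcal{M}}^\ast(p,q))\ \ge\ \Big(1-\frac1e\Big)R(p,q,\mathcal{M}^\ast).$$
   Context: Let $\mathcal{G}=(\mathcal{U},\mathcal{E})$ be a finite directed graph without self-loops, $\mathcal{U}=\{1,\dots,U\}$. For $u,v\in\mathcal{U}$, $D(u,v;\mathcal{G})$ denotes the number of edges of a shortest directed path from $u$ to $v$ in $\mathcal{G}$, with $D(u,v;\mathcal{G})=+\infty$ if there is no such path. For an integer $d\ge0$, the $d$-visible set of $u$ is $\mathcal{V}(u,d;\mathcal{G})=\{v\in\mathcal{U}: D(v,u;\mathcal{G})\le d\}$. Fix an integer social visibility threshold $\tau\ge1$. Let $\mathcal{R}\subseteq\mathcal{U}$ (requesters) and $\mathcal{S}\subseteq\mathcal{U}$ (suppliers) be disjoint. Each requester $u\in\mathcal{R}$ has a valuation $p_u\in[0,1]$ and each supplier $u\in\mathcal{S}$ has a valuation $q_u\in[0,1]$. Let $b$ be a positive integer (budget). For $p\in[0,1]$ let $\widetilde{R}(p)=\{u\in\mathcal{R}: p_u\ge p\}$ and for $q\in[0,1]$ let $\widetilde{S}(q)=\{u\in\mathcal{S}: q_u\le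 q\}$. For $\mathcal{M}\subseteq\mathcal{S}$ let $\widetilde{G}(p,\mathcal{M})$ be the graph obtained from $\mathcal{G}$ by adding a directed edge from every $s\in\mathcal{M}$ to every $r\in\widetilde{R}(p)$. For $u\in\widetilde{R}(p)$ let $I_u(p,\mathcal{M})=|\mathcal{V}(u,\tau;\widetilde{G}(p,\mathcal{M}))\setminus\mathcal{V}(u,\tau;\mathcal{G})|$, and $I(p,\mathcal{M})=\sum_{u\in\widetilde{R}(p)}I_u(p,\mathcal{M})$. The revenue is $R(p,q,\mathcal{M})=p\,I(p,\mathcal{M})-q\,I(p,\mathcal{M})$. The greedy procedure \texttt{OptSupplierSet}$(p,q)$: start with $\mathcal{M}=\emptyset$; for $t=1,\dots,b$, pick $u^\ast\in\widetilde{S}(q)$ maximizing the marginal gain $R(p,q,\mathcal{M}\cup\{u\})-R(p,q,\mathcal{M})$ (ties broken arbitrarily) and set $\mathcal{M}\leftarrow\mathcal{M}\cup\{u^\ast\}$; output $\hat{\mathcal{M}}^\ast(p,q)=\mathcal{M}$ (a subset of $\widetilde{S}(q)$ of size at most $b$). *)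

theory Defs
  imports Complex_Main "HOL-Library.Extended_Nat"
begin

definition dist :: "(nat \<times> nat) set \<Rightarrow> nat \<Rightarrow> nat \<Rightarrow> enat" where
  "dist E u v = (if \<exists>k. (u, v) \<in> E ^^ k then enat (LEAST k. (u, v) \<in> E ^^ k) else \<infinity>)"

definition visible :: "nat \<Rightarrow> (nat \<times> nat) set \<Rightarrow> nat \<Rightarrow> nat \<Rightarrow> nat set" where
  "visible U E u d = {v \<in> {1..U}. dist E v u \<le> enat d}"

definition Rtil :: "nat set \<Rightarrow> (nat \<Rightarrow> real) \<Rightarrow> real \<Rightarrow> nat set" where
  "Rtil Rq pv p = {u \<in> Rq. pv u \<ge> p}"

definition Stil :: "nat set \<Rightarrow> (nat \<Rightarrow> real) \<Rightarrow> real \<Rightarrow> nat set" where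
  "Stil Sp qv q = {u \<in> Sp. qv u \<le> q}"

definition aug_graph :: "(nat \<times> nat) set \<Rightarrow> nat set \<Rightarrow> (nat \<Rightarrow> real) \<Rightarrow> real \<Rightarrow> nat set \<Rightarrow> (nat \<times> nat) set" where
  "aug_graph E Rq pv p M = E \<union> (M \<times> Rtil Rq pv p)"

definition infl_u :: "nat \<Rightarrow> (nat \<times> nat) set \<Rightarrow> nat \<Rightarrow> nat set \<Rightarrow> (nat \<Rightarrow> real) \<Rightarrow> real \<Rightarrow> nat set \<Rightarrow> nat \<Rightarrow> nat" where
  "infl_u U E \<tau> Rq pv p M u =
     card (visible U (aug_graph E Rq pv p M) u \<tau> - visible U E u \<tau>)"

definition infl :: "nat \<Rightarrow> (nat \<times> nat) set \<Rightarrow> nat \<Rightarrow> nat set \<Rightarrow> (nat \<Rightarrow> real) \<Rightarrow> real \<Rightarrow> nat set \<Rightarrow> nat" where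
  "infl U E \<tau> Rq pv p M = (\<Sum>u\<in>Rtil Rq pv p. infl_u U E \<tau> Rq pv p M u)"

definition revenue :: "nat \<Rightarrow> (nat \<times> nat) set \<Rightarrow> nat \<Rightarrow> nat set \<Rightarrow> (nat \<Rightarrow> real) \<Rightarrow> real \<Rightarrow> real \<Rightarrow> nat set \<Rightarrow> real" where
  "revenue U E \<tau> Rq pv p q M =
     p * real (infl U E \<tau> Rq pv p M) - q * real (infl U E \<tau> Rq pv p M)"

definition greedy_step ::
  "nat \<Rightarrow> (nat \<times> nat) set \<Rightarrow> nat \<Rightarrow> nat set \<Rightarrow> (nat \<Rightarrow> real) \<Rightarrow> nat set \<Rightarrow> (nat \<Rightarrow> real)
    \<Rightarrow> real \<Rightarrow> real \<Rightarrow> (nat set \<times> nat set) set" where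
  "greedy_step U E \<tau> Rq pv Sp qv p q =
     {(M, M'). (Stil Sp qv q = {} \<and> M' = M) \<or>
        (\<exists>u\<in>Stil Sp qv q.
           (\<forall>v\<in>Stil Sp qv q.
              revenue U E \<tau> Rq pv p q (insert v M) - revenue U E \<tau> Rq pv p q M
              \<le> revenue U E \<tau> Rq pv p q (insert u M) - revenue U E \<tau> Rq pv p q M)
           \<and> M' = insert u M)}"

text \<open>Possible outputs of OptSupplierSet(p,q) (over all tie-breaking choices): b greedy steps from {}.\<close>
definition greedy_outputs ::
  "nat \<Rightarrow> (nat \<times> nat) set \<Rightarrow> nat \<Rightarrow> nat set \<Rightarrow> (nat \<Rightarrow> real) \<Rightarrow> nat set \<Rightarrow> (nat \<Rightarrow> real)
    \<Rightarrow> real \<Rightarrow> real \<Rightarrow> nat \<Rightarrow> nat set set" where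
  "greedy_outputs U E \<tau> Rq pv Sp qv p q b =
     {M. ({}, M) \<in> (greedy_step U E \<tau> Rq pv Sp qv p q) ^^ b}"

end

theory Submission
  imports Defs
begin

text \<open>A vertex newly becomes \<open>\<tau>\<close>-visible to a requester \<open>u\<close> exactly when it reaches some
  chosen supplier \<open>s\<close> and, through a new edge \<open>s \<rightarrow> r\<close>, reaches \<open>u\<close> within \<open>\<tau>\<close> steps. So the
  revenue is \<open>(p - q)\<close> times a sum over requesters of coverage functions
  \<open>M \<mapsto> |\<Union>s\<in>M. C\<^sub>u(s)|\<close>; for \<open>q = \<alpha> p \<le> p\<close> it is monotone and submodular.
  For such functions each greedy step closes at least a \<open>1/b\<close> fraction of the gap to the
  optimum, since the optimum's at most \<open>b\<close> elements together gain at most \<open>b\<close> times the best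
  single gain; after \<open>b\<close> steps the gap is at most \<open>(1 - 1/b)^b \<le> 1/e\<close> of the optimum.\<close>

lemma dist_le_enat_iff: "dist E v u \<le> enat d \<longleftrightarrow> (\<exists>k\<le>d. (v, u) \<in> E ^^ k)"
proof (cases "\<exists>k. (v, u) \<in> E ^^ k")
  case True
  then have "(v, u) \<in> E ^^ (LEAST k. (v, u) \<in> E ^^ k)" by (rule LeastI_ex)
  with True show ?thesis
    by (auto simp: dist_def intro: Least_le order_trans)
next
  case False
  then show ?thesis by (simp add: dist_def)
qed

definition reach_via ::
  "nat \<Rightarrow> (nat \<times> nat) set \<Rightarrow> nat set \<Rightarrow> nat \<Rightarrow> nat \<Rightarrow> nat \<Rightarrow> nat set" where
  "reach_via U E R u d s =
     {v \<in> {1..U}. \<exists>r\<in>R. \<exists>a c. (v, s) \<in> E ^^ a \<and> (r, u) \<in> E ^^ c \<and> a + 1 + c \<le> d}"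

lemma relpow_add_edges_cases:
  assumes "(v, u) \<in> (E \<union> M \<times> R) ^^ k"
  shows "(v, u) \<in> E ^^ k \<or>
    (\<exists>s\<in>M. \<exists>r\<in>R. \<exists>a c. (v, s) \<in> E ^^ a \<and> (r, u) \<in> E ^^ c \<and> a + 1 + c \<le> k)"
  using assms
proof (induction k arbitrary: u)
  case 0
  then show ?case by simp
next
  case (Suc k)
  then obtain w where vw: "(v, w) \<in> (E \<union> M \<times> R) ^^ k" and wu: "(w, u) \<in> E \<union> M \<times> R"
    by auto
  have u0: "(u, u) \<in> E ^^ 0" by simp
  from Suc.IH[OF vw] show ?case
  proof
    assume vw': "(v, w) \<in> E ^^ k"
    show ?case using wu
    proof
      assume "(w, u) \<in> E"
      with vw' show ?case by (auto intro: relpow_Suc_I)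
    next
      assume "(w, u) \<in> M \<times> R"
      with vw' u0 show ?case by (intro disjI2) fastforce
    qed
  next
    assume "\<exists>s\<in>M. \<exists>r\<in>R. \<exists>a c. (v, s) \<in> E ^^ a \<and> (r, w) \<in> E ^^ c \<and> a + 1 + c \<le> k"
    then obtain s r a c where
      h: "s \<in> M" "r \<in> R" "(v, s) \<in> E ^^ a" "(r, w) \<in> E ^^ c" "a + 1 + c \<le> k"
      by blast
    show ?case using wu
    proof
      assume "(w, u) \<in> E"
      with h have "(r, u) \<in> E ^^ Suc c" "a + 1 + Suc c \<le> Suc k" by (auto intro: relpow_Suc_I)
      with h show ?case by blast
    next
      assume "(w, u) \<in> M \<times> R"
      with h u0 have "u \<in> R" "a + 1 + 0 \<le> Suc k" by auto
      with h u0 show ?case by blast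
    qed
  qed
qed

lemma relpow_add_edges_intro:
  assumes "(v, s) \<in> E ^^ a" "s \<in> M" "r \<in> R" "(r, u) \<in> E ^^ c"
  shows "(v, u) \<in> (E \<union> M \<times> R) ^^ (a + 1 + c)"
proof -
  let ?F = "E \<union> M \<times> R"
  have "(v, s) \<in> ?F ^^ a" "(r, u) \<in> ?F ^^ c"
    using assms(1,4) by (auto intro: relpowp_mono[to_set])
  moreover have "(s, r) \<in> ?F ^^ 1" using assms(2,3) by auto
  ultimately show ?thesis unfolding relpow_add by blast
qed

lemma visible_add_edges:
  "visible U (E \<union> M \<times> R) u d = visible U E u d \<union> (\<Union>s\<in>M. reach_via U E R u d s)"
proof (intro equalityI subsetI)
  fix v
  assume "v \<in> visible U (E \<union> M \<times> R) u d"
  then obtain k where k: "v \<in> {1..U}" "k \<le> d" "(v, u) \<in> (E \<union> M \<times> R) ^^ k"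
    unfolding visible_def dist_le_enat_iff by blast
  from relpow_add_edges_cases[OF k(3)] k
  show "v \<in> visible U E u d \<union> (\<Union>s\<in>M. reach_via U E R u d s)"
    unfolding visible_def dist_le_enat_iff reach_via_def by fastforce
next
  fix v
  assume "v \<in> visible U E u d \<union> (\<Union>s\<in>M. reach_via U E R u d s)"
  then show "v \<in> visible U (E \<union> M \<times> R) u d"
  proof
    assume "v \<in> visible U E u d"
    then show ?thesis
      unfolding visible_def dist_le_enat_iff by (blast intro: relpowp_mono[to_set])
  next
    assume "v \<in> (\<Union>s\<in>M. reach_via U E R u d s)"
    then obtain s r a c where h: "s \<in> M" "v \<in> {1..U}" "r \<in> R"
      "(v, s) \<in> E ^^ a" "(r, u) \<in> E ^^ c" "a + 1 + c \<le> d"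
      unfolding reach_via_def by blast
    from relpow_add_edges_intro[OF h(4,1,3,5)] h show ?thesis
      unfolding visible_def dist_le_enat_iff by blast
  qed
qed

definition submodular :: "('a set \<Rightarrow> real) \<Rightarrow> bool" where
  "submodular g \<longleftrightarrow> (\<forall>A B x. A \<subseteq> B \<longrightarrow> g (insert x B) - g B \<le> g (insert x A) - g A)"

lemma submodularD:
  "submodular g \<Longrightarrow> A \<subseteq> B \<Longrightarrow> g (insert x B) - g B \<le> g (insert x A) - g A"
  unfolding submodular_def by blast

lemma submodular_sum:
  assumes "\<And>i. i \<in> I \<Longrightarrow> submodular (f i)"
  shows "submodular (\<lambda>M. \<Sum>i\<in>I. f i M)"
  unfolding submodular_def sum_subtractf[symmetric]
  using assms by (auto intro: sum_mono submodularD)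

lemma submodular_scale:
  assumes "submodular g" "0 \<le> c"
  shows "submodular (\<lambda>M. c * g M)"
  unfolding submodular_def right_diff_distrib[symmetric]
  using assms by (auto intro: mult_left_mono submodularD)

lemma mono_coverage:
  assumes "finite X" "\<And>s. D s \<subseteq> X"
  shows "mono (\<lambda>M. real (card (\<Union>(D ` M))))"
  by (rule monoI) (use assms in \<open>auto intro!: card_mono intro: finite_subset\<close>)

lemma submodular_coverage:
  fixes D :: "'a \<Rightarrow> 'b set"
  assumes "finite X" "\<And>s. D s \<subseteq> X"
  shows "submodular (\<lambda>M. real (card (\<Union>(D ` M))))"
  unfolding submodular_def
proof (intro allI impI)
  fix A B :: "'a set" and x :: 'a
  assume "A \<subseteq> B"
  have fin: "finite (\<Union>(D ` C))" for C
    using assms by (meson UN_least finite_subset)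
  have gain: "card (\<Union>(D ` insert x C)) = card (D x - \<Union>(D ` C)) + card (\<Union>(D ` C))"
    for C :: "'a set"
  proof -
    have "\<Union>(D ` insert x C) = (D x - \<Union>(D ` C)) \<union> \<Union>(D ` C)" by auto
    also have "card \<dots> = card (D x - \<Union>(D ` C)) + card (\<Union>(D ` C))"
      using fin[of "{x}"] fin[of C] by (intro card_Un_disjoint) auto
    finally show ?thesis .
  qed
  have "card (D x - \<Union>(D ` B)) \<le> card (D x - \<Union>(D ` A))"
    using \<open>A \<subseteq> B\<close> fin[of "{x}"] by (intro card_mono) auto
  then show "real (card (\<Union>(D ` insert x B))) - real (card (\<Union>(D ` B)))
      \<le> real (card (\<Union>(D ` insert x A))) - real (card (\<Union>(D ` A)))"
    unfolding gain by simp
qed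

lemma revenue_eq_coverage:
  "revenue U E \<tau> Rq pv p q M = (p - q) * (\<Sum>u\<in>Rtil Rq pv p.
     real (card (\<Union>s\<in>M. reach_via U E (Rtil Rq pv p) u \<tau> s - visible U E u \<tau>)))"
proof -
  have "infl_u U E \<tau> Rq pv p M u =
      card (\<Union>s\<in>M. reach_via U E (Rtil Rq pv p) u \<tau> s - visible U E u \<tau>)" for u
    unfolding infl_u_def aug_graph_def visible_add_edges by (simp add: Un_Diff)
  then show ?thesis by (simp add: revenue_def infl_def algebra_simps)
qed

lemma
  assumes "q \<le> p"
  shows mono_revenue: "mono (revenue U E \<tau> Rq pv p q)"
    and submodular_revenue: "submodular (revenue U E \<tau> Rq pv p q)"
    and revenue_empty_nonneg: "0 \<le> revenue U E \<tau> Rq pv p q {}"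
proof -
  define D where "D u s = reach_via U E (Rtil Rq pv p) u \<tau> s - visible U E u \<tau>" for u s
  have D: "D u s \<subseteq> {1..U}" for u s by (auto simp: D_def reach_via_def)
  have rev: "revenue U E \<tau> Rq pv p q =
      (\<lambda>M. (p - q) * (\<Sum>u\<in>Rtil Rq pv p. real (card (\<Union>(D u ` M)))))"
    by (simp add: revenue_eq_coverage D_def fun_eq_iff)
  note cov_mono = mono_coverage[OF finite_atLeastAtMost D]
  note cov_submodular = submodular_coverage[OF finite_atLeastAtMost D]
  show "mono (revenue U E \<tau> Rq pv p q)"
    unfolding rev using assms
    by (intro monoI mult_left_mono sum_mono monoD[OF cov_mono]) auto
  show "submodular (revenue U E \<tau> Rq pv p q)"
    unfolding rev using assms cov_submodular
    by (intro submodular_scale submodular_sum) auto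
  show "0 \<le> revenue U E \<tau> Rq pv p q {}"
    unfolding rev using assms by simp
qed

lemma submodular_union_gain_le_sum:
  assumes "submodular g" "finite Opt"
  shows "g (M \<union> Opt) - g M \<le> (\<Sum>y\<in>Opt. g (insert y M) - g M)"
  using assms(2)
proof (induction Opt rule: finite_induct)
  case empty
  then show ?case by simp
next
  case (insert x F)
  have "g (insert x (M \<union> F)) - g (M \<union> F) \<le> g (insert x M) - g M"
    using assms(1) by (rule submodularD) auto
  with insert show ?case by simp
qed

lemma greedy_choice_gap:
  assumes "mono g" "submodular g" "finite Opt" "Opt \<subseteq> S" "card Opt \<le> b" "0 < b"
    and u_max: "\<forall>v\<in>S. g (insert v M) - g M \<le> g (insert u M) - g M"
  shows "g Opt - g (insert u M) \<le> (1 - 1 / real b) * (g Opt - g M)"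
proof -
  define \<delta> where "\<delta> = g (insert u M) - g M"
  have "0 \<le> \<delta>" unfolding \<delta>_def using monoD[OF assms(1)] by (simp add: subset_insertI)
  have "(\<Sum>y\<in>Opt. g (insert y M) - g M) \<le> (\<Sum>y\<in>Opt. \<delta>)"
    using u_max assms(4) unfolding \<delta>_def by (intro sum_mono) blast
  also have "\<dots> \<le> real b * \<delta>"
    using assms(5) \<open>0 \<le> \<delta>\<close> by (simp add: mult_right_mono)
  finally have best: "(\<Sum>y\<in>Opt. g (insert y M) - g M) \<le> real b * \<delta>" .
  have "g Opt \<le> g (M \<union> Opt)" using monoD[OF assms(1)] by simp
  also have "\<dots> \<le> g M + real b * \<delta>"
    using submodular_union_gain_le_sum[OF assms(2,3), of M] best by linarith
  finally have "(g Opt - g M) / real b \<le> \<delta>"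
    using assms(6) by (simp add: divide_le_eq mult.commute)
  then show ?thesis by (simp add: \<delta>_def algebra_simps diff_divide_distrib)
qed

lemma one_minus_inverse_power_le_exp:
  assumes "0 < b"
  shows "(1 - 1 / real b) ^ b \<le> exp (- 1)"
proof -
  have "(1 - 1 / real b) ^ b \<le> exp (- 1 / real b) ^ b"
    using assms exp_ge_add_one_self[of "- 1 / real b"] by (intro power_mono) auto
  also have "\<dots> = exp (- 1)" using assms by (simp add: exp_of_nat_mult[symmetric])
  finally show ?thesis .
qed

lemma greedy_approximation:
  assumes "mono g" "submodular g" "0 \<le> g {}"
    and "finite Opt" "Opt \<subseteq> S" "card Opt \<le> b" "0 < b"
    and step: "\<And>M M'. (M, M') \<in> St \<Longrightarrow> (S = {} \<and> M' = M) \<or>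
      (\<exists>u\<in>S. (\<forall>v\<in>S. g (insert v M) - g M \<le> g (insert u M) - g M) \<and> M' = insert u M)"
    and "({}, Mh) \<in> St ^^ b"
  shows "(1 - 1 / exp 1) * g Opt \<le> g Mh"
proof -
  define \<rho> where "\<rho> = 1 - 1 / real b"
  have "0 \<le> \<rho>" using \<open>0 < b\<close> by (simp add: \<rho>_def)
  have gap: "g Opt - g M \<le> \<rho> ^ k * (g Opt - g {})" if "({}, M) \<in> St ^^ k" for k M
    using that
  proof (induction k arbitrary: M)
    case 0
    then show ?case by simp
  next
    case (Suc k)
    then obtain M0 where M0: "({}, M0) \<in> St ^^ k" "(M0, M) \<in> St" by auto
    have "g Opt - g M \<le> \<rho> * (g Opt - g M0)"
      using step[OF M0(2)]
    proof
      assume "S = {} \<and> M = M0"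
      then have "g Opt - g M0 \<le> 0" "M = M0" using \<open>Opt \<subseteq> S\<close> monoD[OF assms(1)] by auto
      then show ?thesis by (simp add: \<rho>_def algebra_simps divide_right_mono)
    qed (use greedy_choice_gap[OF assms(1,2,4-7)] in \<open>auto simp: \<rho>_def\<close>)
    also have "\<dots> \<le> \<rho> * (\<rho> ^ k * (g Opt - g {}))"
      using Suc.IH[OF M0(1)] \<open>0 \<le> \<rho>\<close> by (rule mult_left_mono)
    finally show ?case by simp
  qed
  have "0 \<le> g Opt - g {}" using monoD[OF assms(1)] by simp
  have "g Opt - g Mh \<le> \<rho> ^ b * (g Opt - g {})" by (rule gap) fact
  also have "\<dots> \<le> exp (- 1) * (g Opt - g {})"
    using one_minus_inverse_power_le_exp[OF \<open>0 < b\<close>] \<open>0 \<le> g Opt - g {}\<close>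
    unfolding \<rho>_def by (rule mult_right_mono)
  also have "\<dots> \<le> exp (- 1) * g Opt" using \<open>0 \<le> g {}\<close> by (simp add: algebra_simps)
  finally show ?thesis by (simp add: exp_minus inverse_eq_divide algebra_simps)
qed

theorem theorem3:
  fixes U :: nat and E :: "(nat \<times> nat) set" and \<tau> b :: nat
    and Rq Sp :: "nat set" and pv qv :: "nat \<Rightarrow> real"
    and \<alpha> p q :: real and Mhat Mopt :: "nat set"
  assumes graph: "E \<subseteq> {1..U} \<times> {1..U}" and noloops: "\<forall>u. (u, u) \<notin> E"
    and tau: "\<tau> \<ge> 1" and budget: "b > 0"
    and RqU: "Rq \<subseteq> {1..U}" and SpU: "Sp \<subseteq> {1..U}" and disj: "Rq \<inter> Sp = {}"
    and pv_range: "\<forall>u\<in>Rq. 0 \<le> pv u \<and> pv u \<le> 1"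
    and qv_range: "\<forall>u\<in>Sp. 0 \<le> qv u \<and> qv u \<le> 1"
    and alpha: "0 < \<alpha>" "\<alpha> < 1"
    and p_range: "0 \<le> p" "p \<le> 1" and q_range: "0 \<le> q" "q \<le> 1"
    and q_def: "q = \<alpha> * p"
    and greedy: "Mhat \<in> greedy_outputs U E \<tau> Rq pv Sp qv p q b"
    and opt_sub: "Mopt \<subseteq> Stil Sp qv q" and opt_card: "card Mopt \<le> b"
    and opt_max: "\<forall>M. M \<subseteq> Stil Sp qv q \<and> card M \<le> b \<longrightarrow>
                    revenue U E \<tau> Rq pv p q M \<le> revenue U E \<tau> Rq pv p q Mopt"
  shows "revenue U E \<tau> Rq pv p q Mhat \<ge> (1 - 1 / exp 1) * revenue U E \<tau> Rq pv p q Mopt"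
proof -
  have "q \<le> p" using q_def alpha p_range by (simp add: mult_left_le_one_le)
  have "finite Mopt"
    using opt_sub SpU by (auto simp: Stil_def intro: finite_subset)
  \<comment> \<open>The bound holds against every feasible competitor.\<close>
  show ?thesis
    using greedy
    by (intro greedy_approximation[OF mono_revenue submodular_revenue revenue_empty_nonneg,
          OF \<open>q \<le> p\<close> \<open>q \<le> p\<close> \<open>q \<le> p\<close> \<open>finite Mopt\<close> opt_sub opt_card budget])
      (auto simp: greedy_step_def greedy_outputs_def)
qed

end
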